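(* Let $d,k\in\mathbb{N}$, $R>0$, and fix arbitrary constants $\varepsilon_j>0$ for the integers $1\le j<\frac d2+1$. Then $$\|\mathbf f\|_{\mathfrak E^k(\mathbb{B}^d_R)}\simeq \|(f_1,f_2)\|_{H^k(\mathbb{B}^d_R)\times H^{k-1}(\mathbb{B}^d_R)}$$ for all $\mathbf f=(f_1,f_2)\in C^\infty(\overline{\mathbb{B}^d_R})^2$ (in particular $(\cdot|\cdot)_{\mathfrak E^k}$ is an inner product).
   Context: $\mathbb{B}^d_R$ is the open ball of radius $R$, $\mathbb{S}^{d-1}_R$ its boundary sphere with surface measure, $C^\infty(\overline{\mathbb{B}^d_R})$ the smooth functions with all derivatives continuous up to the boundary; Einstein summation. Define $\mathbf D_0\mathbf f=(f_2,\Delta f_1)$, $\mathbf D_i\mathbf f=(\partial_if_1,\partial_if_2)$, $i=1,\dots,d$. Sesquilinear forms are defined recursively: $(\mathbf f|\mathbf g)_{\mathfrak E^1}=\int_{\mathbb{B}^d_R}\overline{\partial^if_1}\partial_ig_1+\int_{\mathbb{B}^d_R}\overline{f_2}g_2+\frac{2\varepsilon_1}{R}\int_{\mathbb{S}^{d-1}_R}\overline{f_1}g_1$; for $2\le k<\frac d2+1$: $(\mathbf f|\mathbf g)_{\mathfrak E^k}=\sum_{\mu=0}^d(\mathbf D_\mu\mathbf f|\mathbf D_\mu\mathbf g)_{\mathfrak E^{k-1}}+\frac{2\varepsilon_k}{R}\int_{\mathbb{S}^{d-1}_R}\overline{f_1}g_1$; for $k\ge\frac d2+1$: $(\mathbf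 f|\mathbf g)_{\mathfrak E^k}=\sum_{\mu=0}^d(\mathbf D_\mu\mathbf f|\mathbf D_\mu\mathbf g)_{\mathfrak E^{k-1}}+(\mathbf f|\mathbf g)_{\mathfrak E^{k-1}}$. $\|\mathbf f\|_{\mathfrak E^k}=(\mathbf f|\mathbf f)^{1/2}_{\mathfrak E^k}$. $H^k(\mathbb{B}^d_R)$ is the standard Sobolev space (completion of $C^\infty(\overline{\mathbb{B}^d_R})$), $H^0=L^2$. *)

theory Defs
  imports "HOL-Analysis.Analysis"
begin

type_synonym 'n cfun = "real^'n \<Rightarrow> complex"

definition pd :: "'n::finite \<Rightarrow> 'n cfun \<Rightarrow> 'n cfun" where
  "pd i f x = vector_derivative (\<lambda>t. f (x + t *\<^sub>R axis i 1)) (at 0)"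

fun pds :: "'n::finite list \<Rightarrow> 'n cfun \<Rightarrow> 'n cfun" where
  "pds [] f = f"
| "pds (i # is) f = pd i (pds is f)"

definition laplacian :: "'n::finite cfun \<Rightarrow> 'n cfun" where
  "laplacian f = (\<lambda>x. \<Sum>i\<in>UNIV. pd i (pd i f) x)"

text \<open>C-infinity up to the boundary of the closed ball: smooth in the open ball and
  every partial derivative extends continuously to the closed ball.\<close>
definition smooth_cball :: "real \<Rightarrow> 'n::finite cfun \<Rightarrow> bool" where
  "smooth_cball R f \<longleftrightarrow>
     (\<forall>is. (\<forall>x\<in>ball 0 R. pds is f differentiable (at x)) \<and>
           (\<exists>g. continuous_on (cball 0 R) g \<and> (\<forall>x\<in>ball 0 R. g x = pds is f x)))"

definition ball_int :: "real \<Rightarrow> 'n::finite cfun \<Rightarrow> complex" where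
  "ball_int R g = set_lebesgue_integral lborel (ball 0 R) g"

text \<open>Integral over the sphere of radius R w.r.t. surface measure, defined via the
  coarea formula: d/dr of the ball integral, taken from inside.\<close>
definition sphere_int :: "real \<Rightarrow> 'n::finite cfun \<Rightarrow> complex" where
  "sphere_int R g = Lim (at_left R)
      (\<lambda>r. (ball_int R g - ball_int r g) / complex_of_real (R - r))"

definition D0 :: "'n::finite cfun \<times> 'n cfun \<Rightarrow> 'n cfun \<times> 'n cfun" where
  "D0 f = (snd f, laplacian (fst f))"

definition Di :: "'n::finite \<Rightarrow> 'n cfun \<times> 'n cfun \<Rightarrow> 'n cfun \<times> 'n cfun" where
  "Di i f = (pd i (fst f), pd i (snd f))"

text \<open>The sesquilinear forms (f|g)_{E^k}; the value at k = 0 is unused.\<close>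
fun Eform :: "(nat \<Rightarrow> real) \<Rightarrow> real \<Rightarrow> nat \<Rightarrow> 'n::finite cfun \<times> 'n cfun \<Rightarrow> 'n cfun \<times> 'n cfun \<Rightarrow> complex" where
  "Eform eps R 0 f g = 0"
| "Eform eps R (Suc 0) f g =
     ball_int R (\<lambda>x. \<Sum>i\<in>UNIV. cnj (pd i (fst f) x) * pd i (fst g) x)
     + ball_int R (\<lambda>x. cnj (snd f x) * snd g x)
     + complex_of_real (2 * eps 1 / R) * sphere_int R (\<lambda>x. cnj (fst f x) * fst g x)"
| "Eform eps R (Suc (Suc m)) f g =
     Eform eps R (Suc m) (D0 f) (D0 g) + (\<Sum>i\<in>UNIV. Eform eps R (Suc m) (Di i f) (Di i g))
     + (if real (Suc (Suc m)) < real CARD('n) / 2 + 1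
        then complex_of_real (2 * eps (Suc (Suc m)) / R) * sphere_int R (\<lambda>x. cnj (fst f x) * fst g x)
        else Eform eps R (Suc m) f g)"

definition Enorm :: "(nat \<Rightarrow> real) \<Rightarrow> real \<Rightarrow> nat \<Rightarrow> 'n::finite cfun \<times> 'n cfun \<Rightarrow> real" where
  "Enorm eps R k f = sqrt (Re (Eform eps R k f f))"

definition Hnorm :: "real \<Rightarrow> nat \<Rightarrow> 'n::finite cfun \<Rightarrow> real" where
  "Hnorm R k f = sqrt (\<Sum>j\<le>k. \<Sum>is\<in>{is::'n list. length is = j}.
       set_lebesgue_integral lborel (ball 0 R) (\<lambda>x. (cmod (pds is f x))\<^sup>2))"

definition HHnorm :: "real \<Rightarrow> nat \<Rightarrow> 'n::finite cfun \<times> 'n cfun \<Rightarrow> real" where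
  "HHnorm R k f = sqrt ((Hnorm R k (fst f))\<^sup>2 + (Hnorm R (k - 1) (snd f))\<^sup>2)"

end

(*
  The proof is an induction on k.  The induction hypothesis, applied to (f2, Delta f1) and
  to the partial derivatives d_i f, controls the first two summands of E^k(f) from above
  and below by norms which, using ||Delta f1||_(H^(k-2)) <= sqrt d ||f1||_(H^k), are
  dominated by ||f1||^2_(H^k) + ||f2||^2_(H^(k-1)) and dominate it up to the single missing
  term ||f1||^2_(L^2).  That term has to come from the last summand of E^k(f).  For
  k >= d/2 + 1 this summand is E^(k-1)(f), which controls ||f1||^2_(L^2) by induction.
  Otherwise it is the boundary term.  The surface integral is the derivative at r = R of
  int_(B_r) |f|^2 = r^d int_(B_1) |f(r y)|^2 dy, which yields the Rellich-type identity
      R int_(S_R) |f|^2 = d int_(B_R) |f|^2 + 2 int_(B_R) Re (conj f (x . grad f)).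
  Bounding the last integral by d/4 ||f||^2 + R^2 ||grad f||^2 gives
      d/2 ||f||^2_(L^2(B_R)) <= R ||f||^2_(L^2(S_R)) + 2 R^2 ||grad f||^2_(L^2(B_R))
  together with a converse estimate, so the boundary term and the gradient control the
  L^2 norm, while being bounded by the H^1 norm.
*)

theory Submission
  imports Defs
begin

section \<open>Differentiating integrals with respect to a parameter\<close>

lemma set_integrable_sum:
  fixes f :: "'i \<Rightarrow> 'a \<Rightarrow> 'b::{banach, second_countable_topology}"
  assumes "finite I" "\<And>i. i \<in> I \<Longrightarrow> set_integrable M A (f i)"
  shows "set_integrable M A (\<lambda>x. \<Sum>i\<in>I. f i x)"
  using assms unfolding set_integrable_def scaleR_sum_right
  by (intro Bochner_Integration.integrable_sum)

lemma set_integral_sum: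
  fixes f :: "'i \<Rightarrow> 'a \<Rightarrow> 'b::{banach, second_countable_topology}"
  assumes "finite I" "\<And>i. i \<in> I \<Longrightarrow> set_integrable M A (f i)"
  shows "(LINT x:A|M. (\<Sum>i\<in>I. f i x)) = (\<Sum>i\<in>I. LINT x:A|M. f i x)"
proof -
  have "(LINT x:A|M. (\<Sum>i\<in>I. f i x)) = (LINT x|M. (\<Sum>i\<in>I. indicator A x *\<^sub>R f i x))"
    unfolding set_lebesgue_integral_def by (simp only: scaleR_sum_right)
  also have "\<dots> = (\<Sum>i\<in>I. LINT x:A|M. f i x)"
    unfolding set_lebesgue_integral_def
    by (rule Bochner_Integration.integral_sum) (use assms in \<open>auto simp: set_integrable_def\<close>)
  finally show ?thesis .
qed

lemma abs_difference_quotient_le: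
  fixes f f' :: "real \<Rightarrow> real"
  assumes "a \<le> r" "r < b"
    and deriv: "\<And>s. s \<in> {a..b} \<Longrightarrow> (f has_real_derivative f' s) (at s)"
    and bound: "\<And>s. s \<in> {a..b} \<Longrightarrow> \<bar>f' s\<bar> \<le> B"
  shows "\<bar>(f b - f r) / (b - r)\<bar> \<le> B"
proof -
  have "(f has_real_derivative f' s) (at s)" if "r \<le> s" "s \<le> b" for s
    using deriv assms(1) that by simp
  then obtain z where "r < z" "z < b" "f b - f r = (b - r) * f' z"
    using MVT2[OF \<open>r < b\<close>] by blast
  then show ?thesis
    using bound[of z] assms(1) by simp
qed

lemma LIMSEQ_difference_quotient:
  fixes f :: "real \<Rightarrow> real"
  assumes "(f has_real_derivative D) (at b)" "S \<longlonglongrightarrow> b" "\<And>n. S n \<noteq> b"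
  shows "(\<lambda>n. (f b - f (S n)) / (b - S n)) \<longlonglongrightarrow> D"
proof -
  have "((\<lambda>t. (f t - f b) / (t - b)) \<longlongrightarrow> D) (at b)"
    using assms(1) by (simp add: has_field_derivative_iff)
  moreover have "filterlim S (at b) sequentially"
    using assms(2,3) by (auto simp: filterlim_at intro!: always_eventually)
  ultimately have "(\<lambda>n. (f (S n) - f b) / (S n - b)) \<longlonglongrightarrow> D"
    by (rule filterlim_compose)
  moreover have "(f (S n) - f b) / (S n - b) = (f b - f (S n)) / (b - S n)" for n
    by (metis minus_diff_eq minus_divide_divide)
  ultimately show ?thesis
    by simp
qed

lemma tendsto_set_integral_difference_quotient:
  fixes \<psi> \<psi>' :: "'a \<Rightarrow> real \<Rightarrow> real"
  assumes "a < b" and A: "A \<in> sets M" "emeasure M A < \<infinity>"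
    and integrable: "\<And>s. s \<in> {a..b} \<Longrightarrow> set_integrable M A (\<lambda>y. \<psi> y s)"
    and deriv: "\<And>y s. y \<in> A \<Longrightarrow> s \<in> {a..b} \<Longrightarrow> (\<psi> y has_real_derivative \<psi>' y s) (at s)"
    and bound: "\<And>y s. y \<in> A \<Longrightarrow> s \<in> {a..b} \<Longrightarrow> \<bar>\<psi>' y s\<bar> \<le> B"
  shows "((\<lambda>r. ((LINT y:A|M. \<psi> y b) - (LINT y:A|M. \<psi> y r)) / (b - r))
           \<longlongrightarrow> (LINT y:A|M. \<psi>' y b)) (at_left b)"
proof (rule tendsto_at_left_sequentially[OF \<open>a < b\<close>])
  fix S :: "nat \<Rightarrow> real"
  assume S: "\<And>n. S n < b" "\<And>n. a < S n" "S \<longlonglongrightarrow> b"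
  define Q where "Q n = (\<lambda>y. indicator A y * ((\<psi> y b - \<psi> y (S n)) / (b - S n)))" for n
  have Sab: "S n \<in> {a..b}" for n
    using S(1,2)[of n] by simp
  have "((LINT y:A|M. \<psi> y b) - (LINT y:A|M. \<psi> y (S n))) / (b - S n) = integral\<^sup>L M (Q n)" for n
  proof -
    have "(LINT y:A|M. \<psi> y b) - (LINT y:A|M. \<psi> y (S n)) = (LINT y:A|M. \<psi> y b - \<psi> y (S n))"
      using integrable[OF Sab] integrable[of b] \<open>a < b\<close> by (simp add: set_integral_diff(2))
    then show ?thesis
      by (simp add: Q_def set_lebesgue_integral_def)
  qed
  moreover have "(\<lambda>n. integral\<^sup>L M (Q n)) \<longlonglongrightarrow> (LINT y:A|M. \<psi>' y b)"
    unfolding set_lebesgue_integral_def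
  proof (rule integral_dominated_convergence[where w="\<lambda>y. B * indicator A y"])
    have meas: "(\<lambda>y. indicator A y *\<^sub>R \<psi> y s) \<in> borel_measurable M" if "s \<in> {a..b}" for s
      using integrable[OF that] unfolding set_integrable_def by (rule borel_measurable_integrable)
    have "Q n = (\<lambda>y. (indicator A y *\<^sub>R \<psi> y b - indicator A y *\<^sub>R \<psi> y (S n)) / (b - S n))" for n
      unfolding Q_def by (simp add: right_diff_distrib)
    then show Q: "Q n \<in> borel_measurable M" for n
      using meas[OF Sab] meas[of b] \<open>a < b\<close> by simp
    have lim: "(\<lambda>n. Q n y) \<longlonglongrightarrow> indicator A y *\<^sub>R \<psi>' y b" for y
      using LIMSEQ_difference_quotient[OF deriv S(3)] S(1) \<open>a < b\<close>
      by (cases "y \<in> A") (auto simp: Q_def less_imp_neq)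
    then show "AE y in M. (\<lambda>n. Q n y) \<longlonglongrightarrow> indicator A y *\<^sub>R \<psi>' y b"
      by simp
    show "(\<lambda>y. indicator A y *\<^sub>R \<psi>' y b) \<in> borel_measurable M"
      by (rule borel_measurable_LIMSEQ_real[OF lim Q])
    show "integrable M (\<lambda>y. B * indicator A y)"
      using A by (intro integrable_mult_right integrable_real_indicator)
    show "AE y in M. norm (Q n y) \<le> B * indicator A y" for n
      using abs_difference_quotient_le[of a "S n" b, OF _ S(1) deriv bound] S(2)[of n]
      by (intro AE_I2) (simp add: Q_def split: split_indicator)
  qed
  ultimately show "(\<lambda>n. ((LINT y:A|M. \<psi> y b) - (LINT y:A|M. \<psi> y (S n))) / (b - S n))
      \<longlonglongrightarrow> (LINT y:A|M. \<psi>' y b)"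
    by simp
qed

section \<open>Integrals over balls\<close>

lemma set_integral_ball_rescale:
  fixes g :: "real^'n::finite \<Rightarrow> 'b::{banach, second_countable_topology}"
  assumes "r > 0" "continuous_on (ball 0 r) g"
  shows "(LINT x:ball 0 r|lborel. g x) = r ^ CARD('n) *\<^sub>R (LINT y:ball 0 1|lborel. g (r *\<^sub>R y))"
proof -
  define F where "F = (\<lambda>x. indicator (ball 0 r) x *\<^sub>R g x)"
  have F: "F \<in> borel_measurable borel"
    unfolding F_def by (rule borel_measurable_continuous_on_indicator) (use assms in auto)
  have ball: "r *\<^sub>R y \<in> ball 0 r \<longleftrightarrow> y \<in> ball 0 1" for y :: "real^'n"
    using assms(1) by (simp add: mult_less_cancel_left1)
  have "integral\<^sup>L lborel F
      = integral\<^sup>L (density (distr lborel borel (\<lambda>y. 0 + r *\<^sub>R y)) (\<lambda>_. \<bar>r\<bar> ^ DIM(real^'n))) F"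
    by (subst lborel_affine[of r 0]) (use assms in auto)
  also have "\<dots> = integral\<^sup>L lborel (\<lambda>y. r ^ CARD('n) *\<^sub>R F (r *\<^sub>R y))"
    using F assms(1) by (simp add: integral_density integral_distr)
  also have "\<dots> = integral\<^sup>L lborel (\<lambda>y. r ^ CARD('n) *\<^sub>R (indicator (ball 0 1) y *\<^sub>R g (r *\<^sub>R y)))"
    unfolding F_def using ball by (simp add: indicator_def)
  finally show ?thesis
    unfolding set_lebesgue_integral_def F_def integral_scaleR_right .
qed

definition cball_ext :: "real \<Rightarrow> (real^'n::finite \<Rightarrow> 'b::topological_space) \<Rightarrow> bool" where
  "cball_ext R g \<longleftrightarrow> (\<exists>G. continuous_on (cball 0 R) G \<and> (\<forall>x\<in>ball 0 R. G x = g x))"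

lemma cball_ext_continuous_on: "cball_ext R g \<Longrightarrow> continuous_on (ball 0 R) g"
  unfolding cball_ext_def
  by (metis ball_subset_cball continuous_on_cong continuous_on_subset)

lemma cball_ext_bounded:
  fixes g :: "real^'n::finite \<Rightarrow> 'b::real_normed_vector"
  assumes "cball_ext R g"
  obtains M where "\<And>x. x \<in> ball 0 R \<Longrightarrow> norm (g x) \<le> M"
proof -
  obtain G where G: "continuous_on (cball 0 R) G" "\<forall>x\<in>ball 0 R. G x = g x"
    using assms unfolding cball_ext_def by blast
  have "bounded (G ` cball 0 R)"
    using G(1) by (intro compact_imp_bounded compact_continuous_image) auto
  then obtain M where "\<forall>y\<in>G ` cball 0 R. norm y \<le> M"
    unfolding bounded_iff by blast
  then show ?thesis
    using G(2) that by (metis ball_subset_cball image_eqI subsetD)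
qed

lemma cball_ext_integrable:
  fixes g :: "real^'n::finite \<Rightarrow> 'b::{banach, second_countable_topology}"
  assumes "cball_ext R g"
  shows "set_integrable lborel (ball 0 R) g"
proof -
  obtain G where G: "continuous_on (cball 0 R) G" "\<forall>x\<in>ball 0 R. G x = g x"
    using assms unfolding cball_ext_def by blast
  have "set_integrable lborel (cball 0 R) G"
    unfolding set_integrable_def using G(1) by (intro borel_integrable_compact) auto
  then have "set_integrable lborel (ball 0 R) G"
    by (rule set_integrable_subset) auto
  moreover have "\<And>x. indicator (ball 0 R) x *\<^sub>R G x = indicator (ball 0 R) x *\<^sub>R g x"
    using G(2) by (simp split: split_indicator)
  ultimately show ?thesis
    unfolding set_integrable_def by simp
qed

lemma cball_ext_compose2:
  assumes "cball_ext R a" "cball_ext R b" "continuous_on UNIV (\<lambda>p. h (fst p) (snd p))"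
  shows "cball_ext R (\<lambda>x. h (a x) (b x))"
proof -
  obtain A B where A: "continuous_on (cball 0 R) A" "\<forall>x\<in>ball 0 R. A x = a x"
    and B: "continuous_on (cball 0 R) B" "\<forall>x\<in>ball 0 R. B x = b x"
    using assms(1,2) unfolding cball_ext_def by metis
  have "continuous_on (cball 0 R) ((\<lambda>p. h (fst p) (snd p)) \<circ> (\<lambda>x. (A x, B x)))"
    using A(1) B(1) by (intro continuous_on_compose continuous_intros continuous_on_subset[OF assms(3)]) auto
  then show ?thesis
    unfolding cball_ext_def using A(2) B(2) by (intro exI[of _ "\<lambda>x. h (A x) (B x)"]) (simp add: o_def)
qed

lemma cball_ext_compose:
  assumes "cball_ext R a" "continuous_on UNIV h"
  shows "cball_ext R (\<lambda>x. h (a x))"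
proof -
  have "continuous_on UNIV (\<lambda>p. h (fst p))"
    by (rule continuous_on_compose2[OF assms(2)]) (auto intro: continuous_intros)
  then show ?thesis
    by (rule cball_ext_compose2[OF assms(1) assms(1), of "\<lambda>u v. h u", simplified])
qed

lemma cball_ext_continuous: "continuous_on UNIV g \<Longrightarrow> cball_ext R g"
  unfolding cball_ext_def by (metis continuous_on_subset subset_UNIV)

lemma cball_ext_add:
  fixes a b :: "real^'n::finite \<Rightarrow> 'b::real_normed_vector"
  shows "cball_ext R a \<Longrightarrow> cball_ext R b \<Longrightarrow> cball_ext R (\<lambda>x. a x + b x)"
  by (rule cball_ext_compose2) (auto intro!: continuous_intros)

lemma cball_ext_mult:
  fixes a b :: "real^'n::finite \<Rightarrow> 'b::real_normed_algebra"
  shows "cball_ext R a \<Longrightarrow> cball_ext R b \<Longrightarrow> cball_ext R (\<lambda>x. a x * b x)"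
  by (rule cball_ext_compose2) (auto intro!: continuous_intros)

lemma cball_ext_scaleR:
  fixes a :: "real^'n::finite \<Rightarrow> real" and b :: "real^'n \<Rightarrow> 'b::real_normed_vector"
  shows "cball_ext R a \<Longrightarrow> cball_ext R b \<Longrightarrow> cball_ext R (\<lambda>x. a x *\<^sub>R b x)"
  by (rule cball_ext_compose2) (auto intro!: continuous_intros)

lemma cball_ext_sum:
  fixes a :: "'i \<Rightarrow> real^'n::finite \<Rightarrow> 'b::real_normed_vector"
  assumes "finite I" "\<And>i. i \<in> I \<Longrightarrow> cball_ext R (a i)"
  shows "cball_ext R (\<lambda>x. \<Sum>i\<in>I. a i x)"
  using assms
proof (induction I rule: finite_induct)
  case empty
  show ?case by (simp add: cball_ext_continuous)
next
  case (insert i I)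
  then show ?case by (simp add: cball_ext_add)
qed

lemma cball_ext_rescale:
  fixes g :: "real^'n::finite \<Rightarrow> 'b::topological_space"
  assumes "cball_ext R g" "0 < s" "s \<le> R"
  shows "cball_ext 1 (\<lambda>y. g (s *\<^sub>R y))"
proof -
  obtain G where G: "continuous_on (cball 0 R) G" "\<forall>x\<in>ball 0 R. G x = g x"
    using assms unfolding cball_ext_def by blast
  have "s *\<^sub>R y \<in> cball 0 R" if "y \<in> cball 0 1" for y :: "real^'n"
    using that assms(2,3) mult_mono[of s R "norm y" 1] by simp
  then have "continuous_on (cball 0 1) (\<lambda>y. G (s *\<^sub>R y))"
    by (intro continuous_on_compose2[OF G(1)] continuous_intros) blast
  moreover have "G (s *\<^sub>R y) = g (s *\<^sub>R y)" if "y \<in> ball 0 1" for y :: "real^'n"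
    using that assms(2,3) mult_le_less_imp_less[of s R "norm y" 1] G(2) by simp
  ultimately show ?thesis
    unfolding cball_ext_def by (intro exI[of _ "\<lambda>y. G (s *\<^sub>R y)"]) simp
qed

lemma has_real_derivative_radial:
  fixes g :: "real^'n::finite \<Rightarrow> real"
  assumes "(g has_derivative g') (at (s *\<^sub>R y))" "0 < n"
  shows "((\<lambda>t. t ^ n * g (t *\<^sub>R y)) has_real_derivative
           s ^ (n - 1) * (real n * g (s *\<^sub>R y) + g' (s *\<^sub>R y))) (at s)"
proof -
  have lin: "linear g'"
    using assms(1) by (rule has_derivative_linear)
  have "((\<lambda>t. t *\<^sub>R y) has_derivative (\<lambda>t. t *\<^sub>R y)) (at s)"
    by (auto intro!: derivative_eq_intros)
  from diff_chain_at[OF this assms(1)]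
  have "((\<lambda>t. g (t *\<^sub>R y)) has_derivative (\<lambda>t. t * g' y)) (at s)"
    by (simp add: o_def linear_scale[OF lin])
  then have "((\<lambda>t. g (t *\<^sub>R y)) has_real_derivative g' y) (at s)"
    by (rule has_derivative_imp_has_field_derivative) simp
  moreover have "s ^ n = s ^ (n - 1) * s"
    using assms(2) by (simp add: power_eq_if)
  ultimately show ?thesis
    by (intro DERIV_cong[OF DERIV_mult[OF DERIV_pow]]) (auto simp: linear_scale[OF lin] algebra_simps)
qed

lemma tendsto_rescaled_ball_integral_quotient:
  fixes g :: "real^'n::finite \<Rightarrow> real"
  assumes R: "R > 0"
    and deriv: "\<And>x. x \<in> ball 0 R \<Longrightarrow> (g has_derivative g' x) (at x)"
    and ext: "cball_ext R g" "cball_ext R (\<lambda>x. g' x x)"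
  shows "((\<lambda>r. ((LINT y:ball 0 1|lborel. R ^ CARD('n) * g (R *\<^sub>R y))
                - (LINT y:ball 0 1|lborel. r ^ CARD('n) * g (r *\<^sub>R y))) / (R - r))
          \<longlongrightarrow> (LINT y:ball 0 1|lborel. R ^ (CARD('n) - 1) *
                 (real CARD('n) * g (R *\<^sub>R y) + g' (R *\<^sub>R y) (R *\<^sub>R y)))) (at_left R)"
proof -
  define d where "d = CARD('n)"
  define \<phi> where "\<phi> x = real d * g x + g' x x" for x
  have "cball_ext R (\<lambda>x. real d * g x)"
    by (rule cball_ext_mult[OF cball_ext_continuous ext(1)]) simp
  then have "cball_ext R \<phi>"
    unfolding \<phi>_def using ext(2) by (rule cball_ext_add)
  then obtain M where M: "\<And>x. x \<in> ball 0 R \<Longrightarrow> \<bar>\<phi> x\<bar> \<le> M"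
    using cball_ext_bounded by (metis real_norm_def)
  have scaled: "s *\<^sub>R y \<in> ball 0 R" if "y \<in> ball 0 1" "s \<in> {R/2..R}" for y :: "real^'n" and s
    using that R mult_le_less_imp_less[of s R "norm y" 1] by simp
  have "((\<lambda>r. ((LINT y:ball 0 1|lborel. R ^ d * g (R *\<^sub>R y))
                - (LINT y:ball 0 1|lborel. r ^ d * g (r *\<^sub>R y))) / (R - r))
          \<longlongrightarrow> (LINT y:ball 0 1|lborel. R ^ (d - 1) * \<phi> (R *\<^sub>R y))) (at_left R)"
  proof (rule tendsto_set_integral_difference_quotient[where B="R ^ (d - 1) * M"])
    show "R / 2 < R" "ball 0 1 \<in> sets lborel"
      using R by simp_all
    show "emeasure lborel (ball (0::real^'n) 1) < \<infinity>"
      by (rule emeasure_bounded_finite) simp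
    show "set_integrable lborel (ball 0 1) (\<lambda>y. s ^ d * g (s *\<^sub>R y))" if "s \<in> {R/2..R}" for s
      using that R
      by (intro cball_ext_integrable cball_ext_mult[OF cball_ext_continuous] cball_ext_rescale[OF ext(1)])
         auto
    show "((\<lambda>t. t ^ d * g (t *\<^sub>R y)) has_real_derivative s ^ (d - 1) * \<phi> (s *\<^sub>R y)) (at s)"
      if "y \<in> ball 0 1" "s \<in> {R/2..R}" for y s
      unfolding \<phi>_def using deriv[OF scaled[OF that]]
      by (rule has_real_derivative_radial) (simp add: d_def)
    show "\<bar>s ^ (d - 1) * \<phi> (s *\<^sub>R y)\<bar> \<le> R ^ (d - 1) * M" if "y \<in> ball 0 1" "s \<in> {R/2..R}" for y s
      unfolding abs_mult power_abs using that R M[OF scaled[OF that]]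
      by (intro mult_mono power_mono) auto
  qed
  then show ?thesis
    unfolding \<phi>_def d_def .
qed

lemma ball_integral_left_derivative:
  fixes g :: "real^'n::finite \<Rightarrow> real"
  assumes R: "R > 0"
    and deriv: "\<And>x. x \<in> ball 0 R \<Longrightarrow> (g has_derivative g' x) (at x)"
    and ext: "cball_ext R g" "cball_ext R (\<lambda>x. g' x x)"
  shows "((\<lambda>r. ((LINT x:ball 0 R|lborel. g x) - (LINT x:ball 0 r|lborel. g x)) / (R - r))
           \<longlongrightarrow> (LINT x:ball 0 R|lborel. real CARD('n) * g x + g' x x) / R) (at_left R)"
proof -
  define d where "d = CARD('n)"
  have rescale: "(LINT x:ball 0 r|lborel. h x) = (LINT y:ball 0 1|lborel. r ^ d * h (r *\<^sub>R y))"
    if "0 < r" "r \<le> R" "cball_ext R h" for r and h :: "real^'n \<Rightarrow> real"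
  proof -
    have "continuous_on (ball 0 r) h"
      using cball_ext_continuous_on[OF that(3)] by (rule continuous_on_subset) (use that(2) in auto)
    then show ?thesis
      unfolding d_def using that(1) by (simp add: set_integral_ball_rescale)
  qed
  have ev: "\<forall>\<^sub>F r in at_left R.
      ((LINT y:ball 0 1|lborel. R ^ d * g (R *\<^sub>R y)) - (LINT y:ball 0 1|lborel. r ^ d * g (r *\<^sub>R y))) / (R - r)
      = ((LINT x:ball 0 R|lborel. g x) - (LINT x:ball 0 r|lborel. g x)) / (R - r)"
    using eventually_at_left_real[OF R] by eventually_elim (simp add: rescale[OF _ _ ext(1)] R)
  have "cball_ext R (\<lambda>x. real d * g x + g' x x)"
    using ext by (intro cball_ext_add cball_ext_mult[OF cball_ext_continuous]) auto
  then have limit: "(LINT y:ball 0 1|lborel. R ^ (d - 1) * (real d * g (R *\<^sub>R y) + g' (R *\<^sub>R y) (R *\<^sub>R y)))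
      = (LINT x:ball 0 R|lborel. real d * g x + g' x x) / R"
    using R rescale[OF R order_refl] by (simp add: d_def power_eq_if)
  show ?thesis
    using Lim_transform_eventually[OF tendsto_rescaled_ball_integral_quotient[OF assms, folded d_def, unfolded limit] ev]
    unfolding d_def .
qed

section \<open>Partial derivatives of smooth functions\<close>

lemma pds_append: "pds (is @ js) f = pds is (pds js f)"
  by (induction "is") auto

lemma pd_eq_has_derivative:
  assumes "(f has_derivative f') (at x)"
  shows "pd i f x = f' (axis i 1)"
proof -
  have "((\<lambda>t. x + t *\<^sub>R axis i 1) has_derivative (\<lambda>t. t *\<^sub>R axis i 1)) (at 0)"
    by (auto intro!: derivative_eq_intros)
  from diff_chain_at[OF this] assms
  have "((\<lambda>t. f (x + t *\<^sub>R axis i 1)) has_derivative (\<lambda>t. f' (t *\<^sub>R axis i 1))) (at 0)"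
    by (simp add: o_def)
  then have "((\<lambda>t. f (x + t *\<^sub>R axis i 1)) has_vector_derivative f' (axis i 1)) (at 0)"
    using has_derivative_linear[OF assms] by (simp add: has_vector_derivative_def linear_scale)
  then show ?thesis
    unfolding pd_def by (rule vector_derivative_at)
qed

lemma pd_cong_open:
  assumes "open S" "x \<in> S" "\<And>y. y \<in> S \<Longrightarrow> f y = g y"
  shows "pd i f x = pd i g x"
proof -
  have "((\<lambda>t::real. x + t *\<^sub>R axis i 1) \<longlongrightarrow> x) (nhds 0)"
    by (simp add: tendsto_nhds_iff) (auto intro!: tendsto_eq_intros)
  then have "\<forall>\<^sub>F t in nhds 0. x + t *\<^sub>R axis i 1 \<in> S"
    using assms(1,2) by (rule topological_tendstoD)
  then have "\<forall>\<^sub>F t in nhds 0. f (x + t *\<^sub>R axis i 1) = g (x + t *\<^sub>R axis i 1)"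
    by (rule eventually_mono) (use assms(3) in blast)
  then show ?thesis
    unfolding pd_def by (intro vector_derivative_cong_eq) (auto elim: eventually_mono)
qed

lemma pd_sum:
  assumes "finite A" "\<And>j. j \<in> A \<Longrightarrow> F j differentiable (at x)"
  shows "pd i (\<lambda>y. \<Sum>j\<in>A. F j y) x = (\<Sum>j\<in>A. pd i (F j) x)"
proof -
  obtain D where D: "\<And>j. j \<in> A \<Longrightarrow> (F j has_derivative D j) (at x)"
    using assms(2) unfolding differentiable_def by metis
  then have "((\<lambda>y. \<Sum>j\<in>A. F j y) has_derivative (\<lambda>v. \<Sum>j\<in>A. D j v)) (at x)"
    by (intro has_derivative_sum)
  then have "pd i (\<lambda>y. \<Sum>j\<in>A. F j y) x = (\<Sum>j\<in>A. D j (axis i 1))"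
    by (rule pd_eq_has_derivative)
  also have "\<dots> = (\<Sum>j\<in>A. pd i (F j) x)"
    using D by (intro sum.cong refl pd_eq_has_derivative[symmetric])
  finally show ?thesis .
qed

lemma has_derivative_pd_expansion:
  assumes "f differentiable (at z)"
  shows "(f has_derivative (\<lambda>v. \<Sum>i\<in>UNIV. v $ i *\<^sub>R pd i f z)) (at z)"
proof -
  obtain D where D: "(f has_derivative D) (at z)"
    using assms unfolding differentiable_def by blast
  have "D = (\<lambda>v. \<Sum>i\<in>UNIV. v $ i *\<^sub>R pd i f z)"
  proof
    fix v
    have "D v = D (\<Sum>i\<in>UNIV. v $ i *\<^sub>R axis i 1)"
      by (simp only: scalar_mult_eq_scaleR[symmetric] basis_expansion)
    also have "\<dots> = (\<Sum>i\<in>UNIV. v $ i *\<^sub>R D (axis i 1))"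
      using has_derivative_linear[OF D] by (simp add: linear_sum linear_scale)
    finally show "D v = (\<Sum>i\<in>UNIV. v $ i *\<^sub>R pd i f z)"
      using pd_eq_has_derivative[OF D] by simp
  qed
  then show ?thesis
    using D by simp
qed

lemma smooth_cball_differentiable:
  "smooth_cball R f \<Longrightarrow> x \<in> ball 0 R \<Longrightarrow> pds is f differentiable (at x)"
  unfolding smooth_cball_def by blast

lemma smooth_cball_cball_ext: "smooth_cball R f \<Longrightarrow> cball_ext R (pds is f)"
  unfolding smooth_cball_def cball_ext_def by blast

lemma smooth_cball_pd:
  assumes "smooth_cball R f"
  shows "smooth_cball R (pd i f)"
proof -
  have "pds is (pd i f) = pds (is @ [i]) f" for "is"
    by (simp add: pds_append)
  then show ?thesis
    using assms unfolding smooth_cball_def by simp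
qed

lemma pds_sum:
  assumes "finite A" "\<And>j. j \<in> A \<Longrightarrow> smooth_cball R (F j)" "x \<in> ball 0 R"
  shows "pds is (\<lambda>y. \<Sum>j\<in>A. F j y) x = (\<Sum>j\<in>A. pds is (F j) x)"
  using assms(3)
proof (induction "is" arbitrary: x)
  case Nil
  then show ?case by simp
next
  case (Cons i js)
  have "pd i (pds js (\<lambda>y. \<Sum>j\<in>A. F j y)) x = pd i (\<lambda>y. \<Sum>j\<in>A. pds js (F j) y) x"
    using Cons by (intro pd_cong_open[of "ball 0 R"]) auto
  also have "\<dots> = (\<Sum>j\<in>A. pd i (pds js (F j)) x)"
    using assms(2) Cons.prems by (intro pd_sum[OF assms(1)] smooth_cball_differentiable)
  finally show ?case by simp
qed

lemma smooth_cball_sum: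
  fixes F :: "'j \<Rightarrow> real^'n::finite \<Rightarrow> complex"
  assumes "finite A" "\<And>j. j \<in> A \<Longrightarrow> smooth_cball R (F j)"
  shows "smooth_cball R (\<lambda>y. \<Sum>j\<in>A. F j y)"
  unfolding smooth_cball_def
proof (intro allI conjI ballI)
  fix "is" and x :: "real^'n" assume x: "x \<in> ball 0 R"
  have "(\<lambda>y. \<Sum>j\<in>A. pds is (F j) y) differentiable (at x)"
    using assms x by (intro differentiable_sum ballI smooth_cball_differentiable) auto
  then obtain D where "((\<lambda>y. \<Sum>j\<in>A. pds is (F j) y) has_derivative D) (at x)"
    unfolding differentiable_def by blast
  then have "(pds is (\<lambda>y. \<Sum>j\<in>A. F j y) has_derivative D) (at x)"
    by (rule has_derivative_transform_within_open[OF _ open_ball x]) (simp add: pds_sum[OF assms])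
  then show "pds is (\<lambda>y. \<Sum>j\<in>A. F j y) differentiable (at x)"
    unfolding differentiable_def by blast
next
  fix "is"
  have "cball_ext R (\<lambda>y. \<Sum>j\<in>A. pds is (F j) y)"
    using assms by (intro cball_ext_sum smooth_cball_cball_ext) auto
  then show "\<exists>g. continuous_on (cball 0 R) g \<and> (\<forall>x\<in>ball 0 R. g x = pds is (\<lambda>y. \<Sum>j\<in>A. F j y) x)"
    unfolding cball_ext_def using pds_sum[OF assms] by simp
qed

lemma smooth_cball_laplacian: "smooth_cball R f \<Longrightarrow> smooth_cball R (laplacian f)"
  unfolding laplacian_def by (intro smooth_cball_sum smooth_cball_pd) auto

lemma pds_laplacian:
  "smooth_cball R f \<Longrightarrow> x \<in> ball 0 R \<Longrightarrow>
     pds is (laplacian f) x = (\<Sum>i\<in>UNIV. pds is (pd i (pd i f)) x)"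
  unfolding laplacian_def by (intro pds_sum smooth_cball_pd) auto

section \<open>The boundary term\<close>

definition L2norm_sq :: "real \<Rightarrow> 'n::finite cfun \<Rightarrow> real" where
  "L2norm_sq R g = (LINT x:ball 0 R|lborel. (cmod (g x))\<^sup>2)"

definition grad_norm_sq :: "real \<Rightarrow> 'n::finite cfun \<Rightarrow> real" where
  "grad_norm_sq R f = (\<Sum>i\<in>UNIV. L2norm_sq R (pd i f))"

definition radial_derivative :: "'n::finite cfun \<Rightarrow> 'n cfun" where
  "radial_derivative f x = (\<Sum>i\<in>UNIV. x $ i *\<^sub>R pd i f x)"

definition boundary_norm_sq :: "real \<Rightarrow> 'n::finite cfun \<Rightarrow> real" where
  "boundary_norm_sq R f = Re (sphere_int R (\<lambda>x. cnj (f x) * f x))"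

lemma L2norm_sq_nonneg: "0 \<le> L2norm_sq R g"
  unfolding L2norm_sq_def set_lebesgue_integral_def by (simp add: integral_nonneg_AE)

lemma cball_ext_norm_sq:
  fixes g :: "real^'n::finite \<Rightarrow> 'b::real_normed_vector"
  shows "cball_ext R g \<Longrightarrow> cball_ext R (\<lambda>x. (norm (g x))\<^sup>2)"
  by (rule cball_ext_compose) (auto intro!: continuous_intros)

lemma cball_ext_radial_derivative: "smooth_cball R f \<Longrightarrow> cball_ext R (radial_derivative f)"
  unfolding radial_derivative_def
proof (intro cball_ext_sum cball_ext_scaleR)
  show "cball_ext R (\<lambda>x::real^'n. x $ i)" for i
    by (rule cball_ext_continuous) (auto intro: continuous_intros)
  show "cball_ext R (pd i f)" if "smooth_cball R f" for i
    using smooth_cball_cball_ext[OF that, of "[i]"] by simp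
qed simp

lemma ball_int_norm_sq: "ball_int r (\<lambda>x. cnj (g x) * g x) = complex_of_real (L2norm_sq r g)"
proof -
  have "cnj (g x) * g x = complex_of_real ((cmod (g x))\<^sup>2)" for x
    by (metis complex_norm_square mult.commute)
  then show ?thesis
    unfolding ball_int_def L2norm_sq_def by (simp only: set_integral_complex_of_real)
qed

lemma has_derivative_norm_sq:
  assumes "(f has_derivative f') (at x)"
  shows "((\<lambda>x. (cmod (f x))\<^sup>2) has_derivative (\<lambda>v. 2 * (f x \<bullet> f' v))) (at x)"
  unfolding power2_norm_eq_inner
proof (rule has_derivative_eq_rhs[OF has_derivative_inner[OF assms assms]])
  show "(\<lambda>h. f x \<bullet> f' h + f' h \<bullet> f x) = (\<lambda>v. 2 * (f x \<bullet> f' v))"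
    by (simp add: fun_eq_iff inner_commute[of "f' _"])
qed

lemma tendsto_L2norm_sq_quotient:
  fixes f :: "'n::finite cfun"
  assumes R: "R > 0" and f: "smooth_cball R f"
  shows "((\<lambda>r. (L2norm_sq R f - L2norm_sq r f) / (R - r)) \<longlongrightarrow>
     (real CARD('n) * L2norm_sq R f + 2 * (LINT x:ball 0 R|lborel. f x \<bullet> radial_derivative f x)) / R)
     (at_left R)"
proof -
  have ext_f: "cball_ext R f"
    using smooth_cball_cball_ext[OF f, of "[]"] by simp
  have ext_q: "cball_ext R (\<lambda>x. 2 * (f x \<bullet> radial_derivative f x))"
    by (rule cball_ext_compose2[OF ext_f cball_ext_radial_derivative[OF f], of "\<lambda>u v. 2 * (u \<bullet> v)"])
       (intro continuous_intros)
  have deriv: "((\<lambda>x. (cmod (f x))\<^sup>2) has_derivative (\<lambda>v. 2 * (f x \<bullet> (\<Sum>i\<in>UNIV. v $ i *\<^sub>R pd i f x)))) (at x)"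
    if "x \<in> ball 0 R" for x
    using smooth_cball_differentiable[OF f that, of "[]"]
    by (simp add: has_derivative_norm_sq[OF has_derivative_pd_expansion])
  have "((\<lambda>r. (L2norm_sq R f - L2norm_sq r f) / (R - r)) \<longlongrightarrow>
     (LINT x:ball 0 R|lborel. real CARD('n) * (cmod (f x))\<^sup>2 + 2 * (f x \<bullet> radial_derivative f x)) / R)
     (at_left R)"
    unfolding L2norm_sq_def radial_derivative_def
    by (rule ball_integral_left_derivative[OF R deriv cball_ext_norm_sq[OF ext_f]
          ext_q[unfolded radial_derivative_def]])
  moreover have "(LINT x:ball 0 R|lborel. real CARD('n) * (cmod (f x))\<^sup>2 + 2 * (f x \<bullet> radial_derivative f x))
      = real CARD('n) * L2norm_sq R f + 2 * (LINT x:ball 0 R|lborel. f x \<bullet> radial_derivative f x)"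
    using cball_ext_integrable[OF cball_ext_norm_sq[OF ext_f]] cball_ext_integrable[OF ext_q]
    unfolding L2norm_sq_def
    by (simp add: set_integral_add(2) set_integrable_mult_right)
  ultimately show ?thesis
    by (simp only:)
qed

lemma L2norm_sq_mono_radius:
  assumes "cball_ext R g" "r \<le> R"
  shows "L2norm_sq r g \<le> L2norm_sq R g"
proof -
  have int: "set_integrable lborel (ball 0 R) (\<lambda>x. (cmod (g x))\<^sup>2)"
    using assms(1) by (intro cball_ext_integrable cball_ext_norm_sq)
  then have "set_integrable lborel (ball 0 r) (\<lambda>x. (cmod (g x))\<^sup>2)"
    by (rule set_integrable_subset) (use assms(2) in auto)
  with int show ?thesis
    unfolding L2norm_sq_def set_lebesgue_integral_def set_integrable_def
    by (intro integral_mono) (use assms(2) in \<open>auto split: split_indicator\<close>)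
qed

lemma boundary_norm_sq_eq:
  fixes f :: "'n::finite cfun"
  assumes "R > 0" "smooth_cball R f"
  shows "boundary_norm_sq R f =
    (real CARD('n) * L2norm_sq R f + 2 * (LINT x:ball 0 R|lborel. f x \<bullet> radial_derivative f x)) / R"
proof -
  have eq: "(\<lambda>r. (ball_int R (\<lambda>x. cnj (f x) * f x) - ball_int r (\<lambda>x. cnj (f x) * f x)) / complex_of_real (R - r))
      = (\<lambda>r. complex_of_real ((L2norm_sq R f - L2norm_sq r f) / (R - r)))"
    by (simp add: ball_int_norm_sq)
  have "Lim (at_left R) (\<lambda>r. complex_of_real ((L2norm_sq R f - L2norm_sq r f) / (R - r)))
      = complex_of_real ((real CARD('n) * L2norm_sq R f
          + 2 * (LINT x:ball 0 R|lborel. f x \<bullet> radial_derivative f x)) / R)"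
    by (rule tendsto_Lim[OF trivial_limit_at_left_real tendsto_of_real[OF tendsto_L2norm_sq_quotient[OF assms]]])
  then show ?thesis
    unfolding boundary_norm_sq_def sphere_int_def eq by simp
qed

lemma boundary_norm_sq_nonneg:
  assumes "R > 0" "smooth_cball R f"
  shows "0 \<le> boundary_norm_sq R f"
proof (rule tendsto_lowerbound)
  show "((\<lambda>r. (L2norm_sq R f - L2norm_sq r f) / (R - r)) \<longlongrightarrow> boundary_norm_sq R f) (at_left R)"
    using tendsto_L2norm_sq_quotient[OF assms] boundary_norm_sq_eq[OF assms] by simp
  have "L2norm_sq r f \<le> L2norm_sq R f" if "r < R" for r
    using smooth_cball_cball_ext[OF assms(2), of "[]"] that by (intro L2norm_sq_mono_radius) auto
  moreover have "\<forall>\<^sub>F r in at_left R. r \<in> {R - 1<..<R}"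
    by (rule eventually_at_left_real) simp
  ultimately show "\<forall>\<^sub>F r in at_left R. 0 \<le> (L2norm_sq R f - L2norm_sq r f) / (R - r)"
    by (auto elim!: eventually_mono)
qed simp

lemma radial_term_bound:
  fixes f :: "'n::finite cfun"
  assumes "x \<in> ball 0 R"
  shows "\<bar>f x \<bullet> radial_derivative f x\<bar>
           \<le> real CARD('n) / 4 * (cmod (f x))\<^sup>2 + R\<^sup>2 * (\<Sum>i\<in>UNIV. (cmod (pd i f x))\<^sup>2)"
proof -
  have "cmod (radial_derivative f x) \<le> (\<Sum>i\<in>UNIV. \<bar>x $ i\<bar> * cmod (pd i f x))"
    unfolding radial_derivative_def by (rule order_trans[OF norm_sum]) simp
  also have "\<dots> \<le> (\<Sum>i\<in>UNIV. R * cmod (pd i f x))"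
  proof (intro sum_mono mult_right_mono)
    show "\<bar>x $ i\<bar> \<le> R" for i
      using assms component_le_norm_cart[of x i] by simp
  qed simp
  finally have radial: "cmod (radial_derivative f x) \<le> (\<Sum>i\<in>UNIV. R * cmod (pd i f x))" .
  have "\<bar>f x \<bullet> radial_derivative f x\<bar> \<le> cmod (f x) * cmod (radial_derivative f x)"
    by (rule Cauchy_Schwarz_ineq2)
  also have "\<dots> \<le> cmod (f x) * (\<Sum>i\<in>UNIV. R * cmod (pd i f x))"
    by (rule mult_left_mono[OF radial norm_ge_zero])
  also have "\<dots> = (\<Sum>i\<in>UNIV. cmod (f x) * (R * cmod (pd i f x)))"
    by (rule sum_distrib_left)
  also have "\<dots> \<le> (\<Sum>i\<in>UNIV. (cmod (f x))\<^sup>2 / 4 + R\<^sup>2 * (cmod (pd i f x))\<^sup>2)"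
  proof (rule sum_mono)
    fix i
    have "0 \<le> (cmod (f x) / 2 - R * cmod (pd i f x))\<^sup>2"
      by simp
    then show "cmod (f x) * (R * cmod (pd i f x)) \<le> (cmod (f x))\<^sup>2 / 4 + R\<^sup>2 * (cmod (pd i f x))\<^sup>2"
      by (simp add: power2_eq_square algebra_simps)
  qed
  finally show ?thesis
    by (simp add: sum.distrib sum_distrib_left)
qed

lemma radial_term_integral_bound:
  fixes f :: "'n::finite cfun"
  assumes f: "smooth_cball R f"
  shows "4 * \<bar>LINT x:ball 0 R|lborel. f x \<bullet> radial_derivative f x\<bar>
           \<le> real CARD('n) * L2norm_sq R f + 4 * R\<^sup>2 * grad_norm_sq R f"
proof -
  define q where "q x = real CARD('n) / 4 * (cmod (f x))\<^sup>2 + R\<^sup>2 * (\<Sum>i\<in>UNIV. (cmod (pd i f x))\<^sup>2)" for x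
  have ext_pd: "cball_ext R (pds is f)" for "is"
    using f by (rule smooth_cball_cball_ext)
  have int_f: "set_integrable lborel (ball 0 R) (\<lambda>x. (cmod (pds is f x))\<^sup>2)" for "is"
    by (intro cball_ext_integrable cball_ext_norm_sq ext_pd)
  have int_radial: "set_integrable lborel (ball 0 R) (\<lambda>x. f x \<bullet> radial_derivative f x)"
    using ext_pd[of "[]"] cball_ext_radial_derivative[OF f]
    by (intro cball_ext_integrable cball_ext_compose2[of R f _ "\<lambda>u v. u \<bullet> v"])
       (auto intro!: continuous_intros)
  have int_q: "set_integrable lborel (ball 0 R) q"
    unfolding q_def using int_f[of "[]"] int_f[of "[_]"]
    by (intro set_integral_add set_integrable_mult_right set_integrable_sum) auto
  have "\<bar>LINT x:ball 0 R|lborel. f x \<bullet> radial_derivative f x\<bar>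
      \<le> (LINT x:ball 0 R|lborel. \<bar>f x \<bullet> radial_derivative f x\<bar>)"
    using set_integral_norm_bound[OF int_radial] by simp
  also have "\<dots> \<le> (LINT x:ball 0 R|lborel. q x)"
    using int_radial int_q radial_term_bound unfolding q_def
    by (intro set_integral_mono) (auto intro: set_integrable_abs)
  also have "\<dots> = real CARD('n) / 4 * L2norm_sq R f + R\<^sup>2 * grad_norm_sq R f"
    unfolding q_def L2norm_sq_def grad_norm_sq_def
    using int_f[of "[]"] int_f[of "[_]"]
    by (simp add: set_integral_add(2) set_integrable_mult_right set_integral_sum set_integrable_sum)
  finally show ?thesis
    by simp
qed

lemma boundary_norm_sq_bounds:
  fixes f :: "'n::finite cfun"
  assumes R: "R > 0" and f: "smooth_cball R f"
  shows "L2norm_sq R f \<le> 2 * R / real CARD('n) * boundary_norm_sq R f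
                          + 4 * R\<^sup>2 / real CARD('n) * grad_norm_sq R f"
    and "boundary_norm_sq R f \<le> (3 * real CARD('n) / (2 * R) + 2 * R) * (L2norm_sq R f + grad_norm_sq R f)"
proof -
  define d V L G where "d = real CARD('n)" and "V = boundary_norm_sq R f"
    and "L = L2norm_sq R f" and "G = grad_norm_sq R f"
  have d: "d > 0" and L: "0 \<le> L" and G: "0 \<le> G"
    unfolding d_def L_def G_def grad_norm_sq_def by (simp_all add: L2norm_sq_nonneg sum_nonneg)
  have "R * V = d * L + 2 * (LINT x:ball 0 R|lborel. f x \<bullet> radial_derivative f x)"
    unfolding V_def L_def d_def boundary_norm_sq_eq[OF R f] using R by simp
  with radial_term_integral_bound[OF f]
  have lower: "d * L \<le> 2 * R * V + 4 * R\<^sup>2 * G" and upper: "2 * R * V \<le> 3 * d * L + 4 * R\<^sup>2 * G"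
    unfolding d_def L_def G_def by linarith+
  from lower d show "L2norm_sq R f \<le> 2 * R / d * V + 4 * R\<^sup>2 / d * G"
    unfolding L_def by (simp add: field_simps)
  have "V \<le> 3 * d / (2 * R) * L + 2 * R * G"
    using upper R by (simp add: field_simps power2_eq_square)
  also have "\<dots> \<le> (3 * d / (2 * R) + 2 * R) * L + (3 * d / (2 * R) + 2 * R) * G"
    using L G R d by (intro add_mono mult_right_mono) auto
  finally show "V \<le> (3 * d / (2 * R) + 2 * R) * (L2norm_sq R f + grad_norm_sq R f)"
    unfolding L_def G_def by (simp only: distrib_left)
qed

section \<open>Sobolev norms\<close>

definition Hnorm_sq :: "real \<Rightarrow> nat \<Rightarrow> 'n::finite cfun \<Rightarrow> real" where
  "Hnorm_sq R k f = (\<Sum>j\<le>k. \<Sum>is\<in>{is::'n list. length is = j}. L2norm_sq R (pds is f))"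

lemma Hnorm_eq_sqrt: "Hnorm R k f = sqrt (Hnorm_sq R k f)"
  unfolding Hnorm_def Hnorm_sq_def L2norm_sq_def ..

lemma Hnorm_sq_nonneg: "0 \<le> Hnorm_sq R k f"
  unfolding Hnorm_sq_def by (intro sum_nonneg L2norm_sq_nonneg)

lemma Hnorm_sq_mono: "k \<le> l \<Longrightarrow> Hnorm_sq R k f \<le> Hnorm_sq R l f"
  unfolding Hnorm_sq_def by (intro sum_mono2 sum_nonneg L2norm_sq_nonneg) auto

lemma lists_length_Suc_eq_snoc:
  "{xs :: 'a list. length xs = Suc n} = (\<lambda>(ys, y). ys @ [y]) ` ({ys. length ys = n} \<times> UNIV)"
proof (intro set_eqI iffI)
  fix xs :: "'a list"
  assume "xs \<in> {xs. length xs = Suc n}"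
  then have "xs \<noteq> []" "length (butlast xs) = n"
    by auto
  then show "xs \<in> (\<lambda>(ys, y). ys @ [y]) ` ({ys. length ys = n} \<times> UNIV)"
    by (intro image_eqI[of _ _ "(butlast xs, last xs)"]) auto
qed auto

lemma sum_lists_length_Suc:
  fixes F :: "'a::finite list \<Rightarrow> 'b::comm_monoid_add"
  shows "(\<Sum>xs\<in>{xs. length xs = Suc n}. F xs) = (\<Sum>y\<in>UNIV. \<Sum>ys\<in>{ys. length ys = n}. F (ys @ [y]))"
proof -
  have inj: "inj_on (\<lambda>(ys, y). ys @ [y]) ({ys :: 'a list. length ys = n} \<times> UNIV)"
    by (auto simp: inj_on_def)
  have "(\<Sum>xs\<in>{xs. length xs = Suc n}. F xs) = (\<Sum>(ys, y)\<in>{ys. length ys = n} \<times> UNIV. F (ys @ [y]))"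
    unfolding lists_length_Suc_eq_snoc sum.reindex[OF inj] by (simp add: case_prod_beta)
  also have "\<dots> = (\<Sum>y\<in>UNIV. \<Sum>ys\<in>{ys. length ys = n}. F (ys @ [y]))"
    by (simp add: sum.cartesian_product[symmetric] sum.swap[of _ UNIV])
  finally show ?thesis .
qed

lemma Hnorm_sq_0: "Hnorm_sq R 0 f = L2norm_sq R f"
  unfolding Hnorm_sq_def by simp

lemma Hnorm_sq_Suc:
  fixes f :: "'n::finite cfun"
  shows "Hnorm_sq R (Suc k) f = L2norm_sq R f + (\<Sum>i\<in>UNIV. Hnorm_sq R k (pd i f))"
proof -
  have "Hnorm_sq R (Suc k) f
      = L2norm_sq R f + (\<Sum>j\<le>k. \<Sum>is\<in>{is::'n list. length is = Suc j}. L2norm_sq R (pds is f))"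
    unfolding Hnorm_sq_def by (subst sum.atMost_Suc_shift) simp
  also have "\<dots> = L2norm_sq R f + (\<Sum>j\<le>k. \<Sum>i\<in>UNIV. \<Sum>js\<in>{js::'n list. length js = j}. L2norm_sq R (pds js (pd i f)))"
    by (simp add: sum_lists_length_Suc pds_append)
  finally show ?thesis
    unfolding Hnorm_sq_def by (simp add: sum.swap[of _ UNIV])
qed

lemma Hnorm_sq_1: "Hnorm_sq R 1 f = L2norm_sq R f + grad_norm_sq R f"
  by (simp add: Hnorm_sq_Suc[of R 0, simplified] Hnorm_sq_0 grad_norm_sq_def)

lemma L2norm_sq_le_Hnorm_sq: "L2norm_sq R f \<le> Hnorm_sq R k f"
  using Hnorm_sq_mono[of 0 k R f] by (simp add: Hnorm_sq_0)

lemma sum_Hnorm_sq_pd_le: "(\<Sum>i\<in>UNIV. Hnorm_sq R k (pd i f)) \<le> Hnorm_sq R (Suc k) f"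
  using L2norm_sq_nonneg[of R f] by (simp add: Hnorm_sq_Suc)

lemma Hnorm_sq_pd_le: "Hnorm_sq R k (pd i f) \<le> Hnorm_sq R (Suc k) f"
  using member_le_sum[of i UNIV "\<lambda>i. Hnorm_sq R k (pd i f)"] sum_Hnorm_sq_pd_le[of R k f]
  by (simp add: Hnorm_sq_nonneg)

lemma L2norm_sq_cong: "(\<And>x. x \<in> ball 0 R \<Longrightarrow> g x = h x) \<Longrightarrow> L2norm_sq R g = L2norm_sq R h"
  unfolding L2norm_sq_def by (rule set_lebesgue_integral_cong) auto

lemma L2norm_sq_sum_le:
  fixes g :: "'i \<Rightarrow> 'n::finite cfun"
  assumes "finite I" "\<And>i. i \<in> I \<Longrightarrow> cball_ext R (g i)"
  shows "L2norm_sq R (\<lambda>x. \<Sum>i\<in>I. g i x) \<le> real (card I) * (\<Sum>i\<in>I. L2norm_sq R (g i))"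
proof -
  have int: "set_integrable lborel (ball 0 R) (\<lambda>x. (cmod (g i x))\<^sup>2)" if "i \<in> I" for i
    using assms(2)[OF that] by (intro cball_ext_integrable cball_ext_norm_sq)
  have "L2norm_sq R (\<lambda>x. \<Sum>i\<in>I. g i x) \<le> (LINT x:ball 0 R|lborel. real (card I) * (\<Sum>i\<in>I. (cmod (g i x))\<^sup>2))"
    unfolding L2norm_sq_def
  proof (rule set_integral_mono)
    show "set_integrable lborel (ball 0 R) (\<lambda>x. (cmod (\<Sum>i\<in>I. g i x))\<^sup>2)"
      using assms by (intro cball_ext_integrable cball_ext_norm_sq cball_ext_sum)
    show "set_integrable lborel (ball 0 R) (\<lambda>x. real (card I) * (\<Sum>i\<in>I. (cmod (g i x))\<^sup>2))"
      using assms(1) int by (intro set_integrable_mult_right set_integrable_sum)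
    fix x
    have "(cmod (\<Sum>i\<in>I. g i x))\<^sup>2 \<le> (\<Sum>i\<in>I. cmod (g i x))\<^sup>2"
      by (intro power_mono norm_sum) simp
    also have "\<dots> \<le> real (card I) * (\<Sum>i\<in>I. (cmod (g i x))\<^sup>2)"
      using sum_squared_le_sum_of_squares[of "\<lambda>i. cmod (g i x)" I] by (simp add: mult.commute)
    finally show "(cmod (\<Sum>i\<in>I. g i x))\<^sup>2 \<le> real (card I) * (\<Sum>i\<in>I. (cmod (g i x))\<^sup>2)" .
  qed
  also have "\<dots> = real (card I) * (\<Sum>i\<in>I. L2norm_sq R (g i))"
    unfolding L2norm_sq_def using assms(1) int by (simp add: set_integral_sum)
  finally show ?thesis .
qed

lemma Hnorm_sq_laplacian_le:
  fixes f :: "'n::finite cfun"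
  assumes f: "smooth_cball R f"
  shows "Hnorm_sq R k (laplacian f) \<le> real CARD('n) * Hnorm_sq R (Suc (Suc k)) f"
proof -
  have "L2norm_sq R (pds is (laplacian f)) \<le> real CARD('n) * (\<Sum>i\<in>UNIV. L2norm_sq R (pds is (pd i (pd i f))))"
    for "is"
  proof -
    have "L2norm_sq R (pds is (laplacian f)) = L2norm_sq R (\<lambda>x. \<Sum>i\<in>UNIV. pds is (pd i (pd i f)) x)"
      using pds_laplacian[OF f] by (rule L2norm_sq_cong)
    also have "\<dots> \<le> real CARD('n) * (\<Sum>i\<in>UNIV. L2norm_sq R (pds is (pd i (pd i f))))"
      using f by (intro L2norm_sq_sum_le smooth_cball_cball_ext smooth_cball_pd) auto
    finally show ?thesis .
  qed
  then have "Hnorm_sq R k (laplacian f) \<le> (\<Sum>j\<le>k. \<Sum>is\<in>{is::'n list. length is = j}.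
      real CARD('n) * (\<Sum>i\<in>UNIV. L2norm_sq R (pds is (pd i (pd i f)))))"
    unfolding Hnorm_sq_def by (intro sum_mono)
  also have "\<dots> = real CARD('n) * (\<Sum>i\<in>UNIV. Hnorm_sq R k (pd i (pd i f)))"
    unfolding Hnorm_sq_def sum_distrib_left[symmetric] by (simp add: sum.swap[of _ UNIV] sum_distrib_left)
  also have "\<dots> \<le> real CARD('n) * (\<Sum>i\<in>UNIV. Hnorm_sq R (Suc k) (pd i f))"
    by (intro mult_left_mono sum_mono Hnorm_sq_pd_le) auto
  also have "\<dots> \<le> real CARD('n) * Hnorm_sq R (Suc (Suc k)) f"
    by (intro mult_left_mono sum_Hnorm_sq_pd_le) auto
  finally show ?thesis .
qed

lemma boundary_term_bounds:
  fixes \<alpha> R :: real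
  assumes R: "R > 0" and \<alpha>: "\<alpha> > 0"
  obtains a b K where "0 \<le> a" "0 \<le> b" "0 \<le> K"
    "\<And>f :: 'n::finite cfun. smooth_cball R f \<Longrightarrow>
       0 \<le> \<alpha> * boundary_norm_sq R f \<and>
       L2norm_sq R f \<le> a * (\<alpha> * boundary_norm_sq R f) + b * grad_norm_sq R f \<and>
       \<alpha> * boundary_norm_sq R f \<le> K * Hnorm_sq R 1 f"
proof
  define d where "d = real CARD('n)"
  show "0 \<le> 2 * R / (d * \<alpha>)" "0 \<le> 4 * R\<^sup>2 / d" "0 \<le> \<alpha> * (3 * d / (2 * R) + 2 * R)"
    unfolding d_def using R \<alpha> by simp_all
  fix f :: "'n cfun"
  assume f: "smooth_cball R f"
  show "0 \<le> \<alpha> * boundary_norm_sq R f \<and>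
    L2norm_sq R f \<le> 2 * R / (d * \<alpha>) * (\<alpha> * boundary_norm_sq R f) + 4 * R\<^sup>2 / d * grad_norm_sq R f \<and>
    \<alpha> * boundary_norm_sq R f \<le> \<alpha> * (3 * d / (2 * R) + 2 * R) * Hnorm_sq R 1 f"
    using boundary_norm_sq_nonneg[OF R f] boundary_norm_sq_bounds[OF R f] \<alpha>
    unfolding d_def Hnorm_sq_1 by simp
qed

section \<open>Equivalence of the energy norms\<close>

lemma absorb_lower_bound:
  fixes k a b :: real
  assumes "0 < k" "0 \<le> a" "0 \<le> b"
  obtains c where "c > 0"
    "\<And>L G F X E. 0 \<le> G \<Longrightarrow> 0 \<le> F \<Longrightarrow> 0 \<le> X \<Longrightarrow> L \<le> a * X + b * G \<Longrightarrow>
       k * (G + F) + X \<le> E \<Longrightarrow> c * (L + G + F) \<le> E"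
proof
  define c where "c = min (k / (1 + b)) (1 / (1 + a))"
  show c: "c > 0"
    unfolding c_def using assms by simp
  have "c \<le> k / (1 + b)" "c \<le> 1 / (1 + a)"
    unfolding c_def by simp_all
  then have cb: "c * (1 + b) \<le> k" and ca: "c * (1 + a) \<le> 1"
    using assms by (simp_all add: pos_le_divide_eq)
  fix L G F X E :: real
  assume G: "0 \<le> G" and F: "0 \<le> F" and X: "0 \<le> X" and L: "L \<le> a * X + b * G"
    and E: "k * (G + F) + X \<le> E"
  have "c * L \<le> (c * a) * X + (c * b) * G"
    using mult_left_mono[OF L, of c] c by (simp add: algebra_simps)
  moreover have "0 \<le> c * a" "0 \<le> c * b"
    using c assms(2,3) by simp_all
  then have "c * a \<le> 1" "c \<le> k"
    using ca cb c by (simp_all add: distrib_left)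
  then have "(c * a) * X \<le> X" and "(c * (1 + b)) * G \<le> k * G" and "c * F \<le> k * F"
    using mult_right_mono[of "c * a" 1 X] mult_right_mono[OF cb G] mult_right_mono[of c k F] X F
    by simp_all
  ultimately show "c * (L + G + F) \<le> E"
    using E by (simp add: algebra_simps)
qed

definition Enorm_sq :: "(nat \<Rightarrow> real) \<Rightarrow> real \<Rightarrow> nat \<Rightarrow> 'n::finite cfun \<times> 'n cfun \<Rightarrow> real" where
  "Enorm_sq eps R k f = Re (Eform eps R k f f)"

definition Enorm_sq_extra :: "(nat \<Rightarrow> real) \<Rightarrow> real \<Rightarrow> nat \<Rightarrow> 'n::finite cfun \<times> 'n cfun \<Rightarrow> real" where
  "Enorm_sq_extra eps R k f =
     (if real k < real CARD('n) / 2 + 1 then 2 * eps k / R * boundary_norm_sq R (fst f)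
      else Enorm_sq eps R (k - 1) f)"

lemma Enorm_eq_sqrt: "Enorm eps R k f = sqrt (Enorm_sq eps R k f)"
  unfolding Enorm_def Enorm_sq_def ..

lemma Enorm_sq_1:
  assumes "smooth_cball R f1"
  shows "Enorm_sq eps R 1 (f1, f2) =
           grad_norm_sq R f1 + L2norm_sq R f2 + 2 * eps 1 / R * boundary_norm_sq R f1"
proof -
  have "cball_ext R (\<lambda>x. cnj (pd i f1 x) * pd i f1 x)" for i
    using smooth_cball_cball_ext[OF assms, of "[i]"]
    by (intro cball_ext_mult cball_ext_compose[where h=cnj]) (auto intro: continuous_intros)
  then have "ball_int R (\<lambda>x. \<Sum>i\<in>UNIV. cnj (pd i f1 x) * pd i f1 x)
      = (\<Sum>i\<in>UNIV. ball_int R (\<lambda>x. cnj (pd i f1 x) * pd i f1 x))"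
    unfolding ball_int_def by (intro set_integral_sum cball_ext_integrable) auto
  then show ?thesis
    by (simp add: Enorm_sq_def boundary_norm_sq_def grad_norm_sq_def ball_int_norm_sq)
qed

lemma Enorm_sq_Suc_Suc:
  "Enorm_sq eps R (Suc (Suc m)) (f1, f2) =
     Enorm_sq eps R (Suc m) (f2, laplacian f1) + (\<Sum>i\<in>UNIV. Enorm_sq eps R (Suc m) (pd i f1, pd i f2))
     + Enorm_sq_extra eps R (Suc (Suc m)) (f1, f2)"
  by (simp add: Enorm_sq_def Enorm_sq_extra_def boundary_norm_sq_def D0_def Di_def)

lemma Enorm_sq_extra_lower:
  fixes eps :: "nat \<Rightarrow> real"
  assumes R: "R > 0" and eps: "\<forall>j. 1 \<le> j \<and> real j < real CARD('n::finite) / 2 + 1 \<longrightarrow> eps j > 0"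
    and c: "c > 0"
    and lower: "\<And>f1 f2 :: 'n cfun. smooth_cball R f1 \<Longrightarrow> smooth_cball R f2 \<Longrightarrow>
       c * (Hnorm_sq R (Suc m) f1 + Hnorm_sq R m f2) \<le> Enorm_sq eps R (Suc m) (f1, f2)"
  obtains a b where "0 \<le> a" "0 \<le> b"
    "\<And>f1 f2 :: 'n cfun. smooth_cball R f1 \<Longrightarrow> smooth_cball R f2 \<Longrightarrow>
       0 \<le> Enorm_sq_extra eps R (Suc (Suc m)) (f1, f2) \<and>
       L2norm_sq R f1 \<le> a * Enorm_sq_extra eps R (Suc (Suc m)) (f1, f2) + b * grad_norm_sq R f1"
proof (cases "real (Suc (Suc m)) < real CARD('n) / 2 + 1")
  case True
  then have "2 * eps (Suc (Suc m)) / R > 0"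
    using eps R by simp
  from boundary_term_bounds[OF R this] obtain a b K where
    "0 \<le> a" "0 \<le> b" and "\<And>f :: 'n cfun. smooth_cball R f \<Longrightarrow>
       0 \<le> 2 * eps (Suc (Suc m)) / R * boundary_norm_sq R f \<and>
       L2norm_sq R f \<le> a * (2 * eps (Suc (Suc m)) / R * boundary_norm_sq R f) + b * grad_norm_sq R f"
    by metis
  then show thesis
    using True that[of a b] by (simp add: Enorm_sq_extra_def)
next
  case False
  have "0 \<le> Enorm_sq eps R (Suc m) (f1, f2) \<and>
      L2norm_sq R f1 \<le> 1 / c * Enorm_sq eps R (Suc m) (f1, f2) + 0 * grad_norm_sq R f1"
    if "smooth_cball R f1" "smooth_cball R f2" for f1 f2 :: "'n cfun"
  proof -
    have "L2norm_sq R f1 \<le> Hnorm_sq R (Suc m) f1 + Hnorm_sq R m f2"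
      using L2norm_sq_le_Hnorm_sq[of R f1 "Suc m"] Hnorm_sq_nonneg[of R m f2] by linarith
    then have "c * L2norm_sq R f1 \<le> c * (Hnorm_sq R (Suc m) f1 + Hnorm_sq R m f2)"
      using c by (intro mult_left_mono) auto
    also have "\<dots> \<le> Enorm_sq eps R (Suc m) (f1, f2)"
      by (rule lower[OF that])
    finally have "c * L2norm_sq R f1 \<le> Enorm_sq eps R (Suc m) (f1, f2)" .
    moreover have "0 \<le> c * L2norm_sq R f1"
      using c L2norm_sq_nonneg[of R f1] by simp
    ultimately show ?thesis
      using c by (simp add: field_simps)
  qed
  then show thesis
    using False c that[of "1 / c" 0] by (simp add: Enorm_sq_extra_def)
qed

lemma Enorm_sq_extra_upper:
  fixes eps :: "nat \<Rightarrow> real"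
  assumes R: "R > 0" and eps: "\<forall>j. 1 \<le> j \<and> real j < real CARD('n::finite) / 2 + 1 \<longrightarrow> eps j > 0"
    and C: "C > 0"
    and upper: "\<And>f1 f2 :: 'n cfun. smooth_cball R f1 \<Longrightarrow> smooth_cball R f2 \<Longrightarrow>
       Enorm_sq eps R (Suc m) (f1, f2) \<le> C * (Hnorm_sq R (Suc m) f1 + Hnorm_sq R m f2)"
  obtains K where "0 \<le> K"
    "\<And>f1 f2 :: 'n cfun. smooth_cball R f1 \<Longrightarrow> smooth_cball R f2 \<Longrightarrow>
       Enorm_sq_extra eps R (Suc (Suc m)) (f1, f2) \<le> K * (Hnorm_sq R (Suc (Suc m)) f1 + Hnorm_sq R (Suc m) f2)"
proof (cases "real (Suc (Suc m)) < real CARD('n) / 2 + 1")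
  case True
  then have "2 * eps (Suc (Suc m)) / R > 0"
    using eps R by simp
  from boundary_term_bounds[OF R this] obtain K where K: "0 \<le> K" and
    bound: "\<And>f :: 'n cfun. smooth_cball R f \<Longrightarrow>
       2 * eps (Suc (Suc m)) / R * boundary_norm_sq R f \<le> K * Hnorm_sq R 1 f"
    by metis
  show thesis
  proof (rule that[OF K])
    fix f1 f2 :: "'n cfun"
    assume "smooth_cball R f1"
    have "K * Hnorm_sq R 1 f1 \<le> K * (Hnorm_sq R (Suc (Suc m)) f1 + Hnorm_sq R (Suc m) f2)"
      using K Hnorm_sq_mono[of 1 "Suc (Suc m)" R f1] Hnorm_sq_nonneg[of R "Suc m" f2]
      by (intro mult_left_mono) auto
    then show "Enorm_sq_extra eps R (Suc (Suc m)) (f1, f2)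
        \<le> K * (Hnorm_sq R (Suc (Suc m)) f1 + Hnorm_sq R (Suc m) f2)"
      using True bound[OF \<open>smooth_cball R f1\<close>] by (simp add: Enorm_sq_extra_def)
  qed
next
  case False
  show thesis
  proof (rule that[of C])
    fix f1 f2 :: "'n cfun"
    assume "smooth_cball R f1" "smooth_cball R f2"
    have "C * (Hnorm_sq R (Suc m) f1 + Hnorm_sq R m f2)
        \<le> C * (Hnorm_sq R (Suc (Suc m)) f1 + Hnorm_sq R (Suc m) f2)"
      using C by (intro mult_left_mono add_mono Hnorm_sq_mono) auto
    then show "Enorm_sq_extra eps R (Suc (Suc m)) (f1, f2)
        \<le> C * (Hnorm_sq R (Suc (Suc m)) f1 + Hnorm_sq R (Suc m) f2)"
      using False upper[OF \<open>smooth_cball R f1\<close> \<open>smooth_cball R f2\<close>] by (simp add: Enorm_sq_extra_def)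
  qed (use C in simp)
qed

lemma Enorm_sq_lower_bound_1:
  fixes eps :: "nat \<Rightarrow> real"
  assumes R: "R > 0" and eps: "\<forall>j. 1 \<le> j \<and> real j < real CARD('n::finite) / 2 + 1 \<longrightarrow> eps j > 0"
  obtains c where "c > 0"
    "\<And>f1 f2 :: 'n cfun. smooth_cball R f1 \<Longrightarrow> smooth_cball R f2 \<Longrightarrow>
       c * (Hnorm_sq R 1 f1 + Hnorm_sq R 0 f2) \<le> Enorm_sq eps R 1 (f1, f2)"
proof -
  have "2 * eps 1 / R > 0"
    using eps R by simp
  from boundary_term_bounds[OF R this] obtain a b K where ab: "0 \<le> a" "0 \<le> b" and
    boundary: "\<And>f :: 'n cfun. smooth_cball R f \<Longrightarrow>
       0 \<le> 2 * eps 1 / R * boundary_norm_sq R f \<and>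
       L2norm_sq R f \<le> a * (2 * eps 1 / R * boundary_norm_sq R f) + b * grad_norm_sq R f"
    by metis
  obtain c where c: "c > 0" and absorb: "\<And>L G F X E. 0 \<le> G \<Longrightarrow> 0 \<le> F \<Longrightarrow> 0 \<le> X \<Longrightarrow>
      L \<le> a * X + b * G \<Longrightarrow> 1 * (G + F) + X \<le> E \<Longrightarrow> c * (L + G + F) \<le> E"
    using absorb_lower_bound[of 1 a b] ab by auto
  show thesis
  proof (rule that[OF c])
    fix f1 f2 :: "'n cfun"
    assume f1: "smooth_cball R f1"
    have "0 \<le> grad_norm_sq R f1"
      unfolding grad_norm_sq_def by (intro sum_nonneg L2norm_sq_nonneg)
    with boundary[OF f1] show "c * (Hnorm_sq R 1 f1 + Hnorm_sq R 0 f2) \<le> Enorm_sq eps R 1 (f1, f2)"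
      unfolding Hnorm_sq_1 Hnorm_sq_0 Enorm_sq_1[OF f1]
      by (intro absorb[of "grad_norm_sq R f1" "L2norm_sq R f2" "2 * eps 1 / R * boundary_norm_sq R f1"])
         (simp_all add: L2norm_sq_nonneg)
  qed
qed

lemma Enorm_sq_lower_bound_Suc:
  fixes eps :: "nat \<Rightarrow> real"
  assumes R: "R > 0" and eps: "\<forall>j. 1 \<le> j \<and> real j < real CARD('n::finite) / 2 + 1 \<longrightarrow> eps j > 0"
    and c: "c > 0"
    and lower: "\<And>f1 f2 :: 'n cfun. smooth_cball R f1 \<Longrightarrow> smooth_cball R f2 \<Longrightarrow>
       c * (Hnorm_sq R (Suc m) f1 + Hnorm_sq R m f2) \<le> Enorm_sq eps R (Suc m) (f1, f2)"
  obtains c' where "c' > 0"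
    "\<And>f1 f2 :: 'n cfun. smooth_cball R f1 \<Longrightarrow> smooth_cball R f2 \<Longrightarrow>
       c' * (Hnorm_sq R (Suc (Suc m)) f1 + Hnorm_sq R (Suc m) f2) \<le> Enorm_sq eps R (Suc (Suc m)) (f1, f2)"
proof -
  obtain a b where ab: "0 \<le> a" "0 \<le> b" and extra: "\<And>f1 f2 :: 'n cfun. smooth_cball R f1 \<Longrightarrow>
      smooth_cball R f2 \<Longrightarrow> 0 \<le> Enorm_sq_extra eps R (Suc (Suc m)) (f1, f2) \<and>
      L2norm_sq R f1 \<le> a * Enorm_sq_extra eps R (Suc (Suc m)) (f1, f2) + b * grad_norm_sq R f1"
    using Enorm_sq_extra_lower[OF R eps c lower] by metis
  obtain c' where c': "c' > 0" and absorb: "\<And>L G F X E. 0 \<le> G \<Longrightarrow> 0 \<le> F \<Longrightarrow> 0 \<le> X \<Longrightarrow>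
      L \<le> a * X + b * G \<Longrightarrow> c * (G + F) + X \<le> E \<Longrightarrow> c' * (L + G + F) \<le> E"
    using absorb_lower_bound[OF c ab] by metis
  show thesis
  proof (rule that[OF c'])
    fix f1 f2 :: "'n cfun"
    assume f1: "smooth_cball R f1" and f2: "smooth_cball R f2"
    define P where "P = (\<Sum>i\<in>UNIV. Hnorm_sq R (Suc m) (pd i f1))"
    have "c * Hnorm_sq R (Suc m) f2 \<le> c * (Hnorm_sq R (Suc m) f2 + Hnorm_sq R m (laplacian f1))"
      using c Hnorm_sq_nonneg[of R m "laplacian f1"] by simp
    also have "\<dots> \<le> Enorm_sq eps R (Suc m) (f2, laplacian f1)"
      by (rule lower[OF f2 smooth_cball_laplacian[OF f1]])
    finally have A: "c * Hnorm_sq R (Suc m) f2 \<le> Enorm_sq eps R (Suc m) (f2, laplacian f1)" .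
    have "c * P \<le> (\<Sum>i\<in>UNIV. c * (Hnorm_sq R (Suc m) (pd i f1) + Hnorm_sq R m (pd i f2)))"
      unfolding P_def sum_distrib_left using c by (intro sum_mono) (simp add: Hnorm_sq_nonneg)
    also have "\<dots> \<le> (\<Sum>i\<in>UNIV. Enorm_sq eps R (Suc m) (pd i f1, pd i f2))"
      using f1 f2 by (intro sum_mono lower smooth_cball_pd)
    finally have B: "c * P \<le> (\<Sum>i\<in>UNIV. Enorm_sq eps R (Suc m) (pd i f1, pd i f2))" .
    have "grad_norm_sq R f1 \<le> P"
      unfolding grad_norm_sq_def P_def by (intro sum_mono L2norm_sq_le_Hnorm_sq)
    then have "L2norm_sq R f1 \<le> a * Enorm_sq_extra eps R (Suc (Suc m)) (f1, f2) + b * P"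
      using extra[OF f1 f2] mult_left_mono[of _ P b] ab(2) by (meson add_left_mono order_trans)
    moreover have "c * (P + Hnorm_sq R (Suc m) f2) + Enorm_sq_extra eps R (Suc (Suc m)) (f1, f2)
        \<le> Enorm_sq eps R (Suc (Suc m)) (f1, f2)"
      unfolding Enorm_sq_Suc_Suc distrib_left using A B by linarith
    ultimately have "c' * (L2norm_sq R f1 + P + Hnorm_sq R (Suc m) f2) \<le> Enorm_sq eps R (Suc (Suc m)) (f1, f2)"
      using extra[OF f1 f2] by (intro absorb) (simp_all add: P_def sum_nonneg Hnorm_sq_nonneg)
    then show "c' * (Hnorm_sq R (Suc (Suc m)) f1 + Hnorm_sq R (Suc m) f2) \<le> Enorm_sq eps R (Suc (Suc m)) (f1, f2)"
      by (simp add: Hnorm_sq_Suc[of R "Suc m" f1] P_def add.assoc)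
  qed
qed

lemma Enorm_sq_upper_bound_1:
  fixes eps :: "nat \<Rightarrow> real"
  assumes R: "R > 0" and eps: "\<forall>j. 1 \<le> j \<and> real j < real CARD('n::finite) / 2 + 1 \<longrightarrow> eps j > 0"
  obtains C where "C > 0"
    "\<And>f1 f2 :: 'n cfun. smooth_cball R f1 \<Longrightarrow> smooth_cball R f2 \<Longrightarrow>
       Enorm_sq eps R 1 (f1, f2) \<le> C * (Hnorm_sq R 1 f1 + Hnorm_sq R 0 f2)"
proof -
  have "2 * eps 1 / R > 0"
    using eps R by simp
  from boundary_term_bounds[OF R this] obtain K where K: "0 \<le> K" and
    boundary: "\<And>f :: 'n cfun. smooth_cball R f \<Longrightarrow>
       2 * eps 1 / R * boundary_norm_sq R f \<le> K * Hnorm_sq R 1 f"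
    by metis
  show thesis
  proof (rule that)
    show "1 + K > 0"
      using K by simp
    fix f1 f2 :: "'n cfun"
    assume f1: "smooth_cball R f1"
    have "grad_norm_sq R f1 \<le> Hnorm_sq R 1 f1"
      unfolding Hnorm_sq_1 using L2norm_sq_nonneg[of R f1] by simp
    with boundary[OF f1] have "Enorm_sq eps R 1 (f1, f2) \<le> (1 + K) * Hnorm_sq R 1 f1 + Hnorm_sq R 0 f2"
      unfolding Enorm_sq_1[OF f1] Hnorm_sq_0 by (simp add: algebra_simps)
    also have "\<dots> \<le> (1 + K) * (Hnorm_sq R 1 f1 + Hnorm_sq R 0 f2)"
      using K Hnorm_sq_nonneg[of R 0 f2] by (simp add: algebra_simps)
    finally show "Enorm_sq eps R 1 (f1, f2) \<le> (1 + K) * (Hnorm_sq R 1 f1 + Hnorm_sq R 0 f2)" .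
  qed
qed

lemma Enorm_sq_upper_bound_Suc:
  fixes eps :: "nat \<Rightarrow> real"
  assumes R: "R > 0" and eps: "\<forall>j. 1 \<le> j \<and> real j < real CARD('n::finite) / 2 + 1 \<longrightarrow> eps j > 0"
    and C: "C > 0"
    and upper: "\<And>f1 f2 :: 'n cfun. smooth_cball R f1 \<Longrightarrow> smooth_cball R f2 \<Longrightarrow>
       Enorm_sq eps R (Suc m) (f1, f2) \<le> C * (Hnorm_sq R (Suc m) f1 + Hnorm_sq R m f2)"
  obtains C' where "C' > 0"
    "\<And>f1 f2 :: 'n cfun. smooth_cball R f1 \<Longrightarrow> smooth_cball R f2 \<Longrightarrow>
       Enorm_sq eps R (Suc (Suc m)) (f1, f2) \<le> C' * (Hnorm_sq R (Suc (Suc m)) f1 + Hnorm_sq R (Suc m) f2)"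
proof -
  obtain K where K: "0 \<le> K" and extra: "\<And>f1 f2 :: 'n cfun. smooth_cball R f1 \<Longrightarrow>
      smooth_cball R f2 \<Longrightarrow> Enorm_sq_extra eps R (Suc (Suc m)) (f1, f2)
        \<le> K * (Hnorm_sq R (Suc (Suc m)) f1 + Hnorm_sq R (Suc m) f2)"
    using Enorm_sq_extra_upper[OF R eps C upper] by metis
  define d where "d = real CARD('n)"
  show thesis
  proof (rule that)
    show "C * (2 + d) + K > 0"
      using C K unfolding d_def by (simp add: add_pos_nonneg)
    fix f1 f2 :: "'n cfun"
    assume f1: "smooth_cball R f1" and f2: "smooth_cball R f2"
    define T where "T = Hnorm_sq R (Suc (Suc m)) f1 + Hnorm_sq R (Suc m) f2"
    have T: "Hnorm_sq R (Suc (Suc m)) f1 \<le> T" "Hnorm_sq R (Suc m) f2 \<le> T"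
      unfolding T_def using Hnorm_sq_nonneg by (simp_all add: add_increasing add_increasing2)
    have "Hnorm_sq R m (laplacian f1) \<le> d * Hnorm_sq R (Suc (Suc m)) f1"
      unfolding d_def by (rule Hnorm_sq_laplacian_le[OF f1])
    also have "\<dots> \<le> d * T"
      using T(1) unfolding d_def by (intro mult_left_mono) auto
    finally have "Hnorm_sq R (Suc m) f2 + Hnorm_sq R m (laplacian f1) \<le> (1 + d) * T"
      using T(2) by (simp add: distrib_right)
    then have "C * (Hnorm_sq R (Suc m) f2 + Hnorm_sq R m (laplacian f1)) \<le> C * ((1 + d) * T)"
      using C by (intro mult_left_mono) auto
    with upper[OF f2 smooth_cball_laplacian[OF f1]]
    have A: "Enorm_sq eps R (Suc m) (f2, laplacian f1) \<le> C * ((1 + d) * T)"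
      by (rule order_trans)
    have "(\<Sum>i\<in>UNIV. Enorm_sq eps R (Suc m) (pd i f1, pd i f2))
        \<le> (\<Sum>i\<in>UNIV. C * (Hnorm_sq R (Suc m) (pd i f1) + Hnorm_sq R m (pd i f2)))"
      using f1 f2 by (intro sum_mono upper smooth_cball_pd)
    also have "\<dots> \<le> C * T"
      unfolding T_def sum_distrib_left[symmetric] sum.distrib using C sum_Hnorm_sq_pd_le
      by (intro mult_left_mono add_mono) auto
    finally have B: "(\<Sum>i\<in>UNIV. Enorm_sq eps R (Suc m) (pd i f1, pd i f2)) \<le> C * T" .
    show "Enorm_sq eps R (Suc (Suc m)) (f1, f2) \<le> (C * (2 + d) + K) * T"
      unfolding Enorm_sq_Suc_Suc using A B extra[OF f1 f2] unfolding T_def[symmetric]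
      by (simp add: algebra_simps)
  qed
qed

lemma Enorm_sq_lower_bound:
  fixes eps :: "nat \<Rightarrow> real"
  assumes R: "R > 0" and eps: "\<forall>j. 1 \<le> j \<and> real j < real CARD('n::finite) / 2 + 1 \<longrightarrow> eps j > 0"
  shows "\<exists>c>0. \<forall>f1 f2 :: 'n cfun. smooth_cball R f1 \<longrightarrow> smooth_cball R f2 \<longrightarrow>
           c * (Hnorm_sq R (Suc m) f1 + Hnorm_sq R m f2) \<le> Enorm_sq eps R (Suc m) (f1, f2)"
proof (induction m)
  case 0
  obtain c where "c > 0" "\<And>f1 f2 :: 'n cfun. smooth_cball R f1 \<Longrightarrow> smooth_cball R f2 \<Longrightarrow>
      c * (Hnorm_sq R 1 f1 + Hnorm_sq R 0 f2) \<le> Enorm_sq eps R 1 (f1, f2)"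
    using Enorm_sq_lower_bound_1[OF R eps] by metis
  then show ?case
    unfolding One_nat_def[symmetric] by blast
next
  case (Suc m)
  then obtain c where "c > 0" "\<And>f1 f2 :: 'n cfun. smooth_cball R f1 \<Longrightarrow> smooth_cball R f2 \<Longrightarrow>
      c * (Hnorm_sq R (Suc m) f1 + Hnorm_sq R m f2) \<le> Enorm_sq eps R (Suc m) (f1, f2)"
    by blast
  from Enorm_sq_lower_bound_Suc[OF R eps this] show ?case
    by metis
qed

lemma Enorm_sq_upper_bound:
  fixes eps :: "nat \<Rightarrow> real"
  assumes R: "R > 0" and eps: "\<forall>j. 1 \<le> j \<and> real j < real CARD('n::finite) / 2 + 1 \<longrightarrow> eps j > 0"
  shows "\<exists>C>0. \<forall>f1 f2 :: 'n cfun. smooth_cball R f1 \<longrightarrow> smooth_cball R f2 \<longrightarrow>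
           Enorm_sq eps R (Suc m) (f1, f2) \<le> C * (Hnorm_sq R (Suc m) f1 + Hnorm_sq R m f2)"
proof (induction m)
  case 0
  obtain C where "C > 0" "\<And>f1 f2 :: 'n cfun. smooth_cball R f1 \<Longrightarrow> smooth_cball R f2 \<Longrightarrow>
      Enorm_sq eps R 1 (f1, f2) \<le> C * (Hnorm_sq R 1 f1 + Hnorm_sq R 0 f2)"
    using Enorm_sq_upper_bound_1[OF R eps] by metis
  then show ?case
    unfolding One_nat_def[symmetric] by blast
next
  case (Suc m)
  then obtain C where "C > 0" "\<And>f1 f2 :: 'n cfun. smooth_cball R f1 \<Longrightarrow> smooth_cball R f2 \<Longrightarrow>
      Enorm_sq eps R (Suc m) (f1, f2) \<le> C * (Hnorm_sq R (Suc m) f1 + Hnorm_sq R m f2)"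
    by blast
  from Enorm_sq_upper_bound_Suc[OF R eps this] show ?case
    by metis
qed

theorem mainTheorem4:
  fixes eps :: "nat \<Rightarrow> real" and R :: real and k :: nat
  assumes "R > 0" and "k \<ge> 1"
    and "\<forall>j. 1 \<le> j \<and> real j < real CARD('n::finite) / 2 + 1 \<longrightarrow> eps j > 0"
  shows "\<exists>c C. c > 0 \<and> C > 0 \<and>
    (\<forall>f1 f2 :: real^'n \<Rightarrow> complex. smooth_cball R f1 \<and> smooth_cball R f2 \<longrightarrow>
       c * HHnorm R k (f1, f2) \<le> Enorm eps R k (f1, f2) \<and>
       Enorm eps R k (f1, f2) \<le> C * HHnorm R k (f1, f2))"
proof -
  obtain m where k: "k = Suc m"
    using assms(2) by (cases k) auto
  obtain c where c: "c > 0" and lower: "\<forall>f1 f2 :: 'n cfun. smooth_cball R f1 \<longrightarrow> smooth_cball R f2 \<longrightarrow>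
      c * (Hnorm_sq R (Suc m) f1 + Hnorm_sq R m f2) \<le> Enorm_sq eps R (Suc m) (f1, f2)"
    using Enorm_sq_lower_bound[OF assms(1,3)] by blast
  obtain C where C: "C > 0" and upper: "\<forall>f1 f2 :: 'n cfun. smooth_cball R f1 \<longrightarrow> smooth_cball R f2 \<longrightarrow>
      Enorm_sq eps R (Suc m) (f1, f2) \<le> C * (Hnorm_sq R (Suc m) f1 + Hnorm_sq R m f2)"
    using Enorm_sq_upper_bound[OF assms(1,3)] by blast
  have HH: "HHnorm R k (f1, f2) = sqrt (Hnorm_sq R (Suc m) f1 + Hnorm_sq R m f2)" for f1 f2 :: "'n cfun"
    unfolding HHnorm_def Hnorm_eq_sqrt k by (simp add: Hnorm_sq_nonneg)
  show ?thesis
  proof (rule exI[of _ "sqrt c"], rule exI[of _ "sqrt C"], intro conjI allI impI)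
    show "sqrt c > 0" "sqrt C > 0"
      using c C by simp_all
    fix f1 f2 :: "'n cfun"
    assume "smooth_cball R f1 \<and> smooth_cball R f2"
    then show "sqrt c * HHnorm R k (f1, f2) \<le> Enorm eps R k (f1, f2)"
      and "Enorm eps R k (f1, f2) \<le> sqrt C * HHnorm R k (f1, f2)"
      using lower upper unfolding HH unfolding Enorm_eq_sqrt real_sqrt_mult[symmetric] k by simp_all
  qed
qed

end
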